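(* Let $v$ be a floating-point value (zero or a normal IEEE 754 double) with $\alpha = DP(v) \le 22$ and $\beta = DS(v) \le 15$. Then $v = round(v \otimes 10^{\alpha}) \div 10^{\alpha}$, where the division is performed in IEEE 754 double-precision arithmetic; that is, this floating-point computation introduces no error and recovers exactly the double $v$.
   Context: Convention: a floating-point value $v$ is identified with the decimal number given by its decimal format $DF(v)$, i.e. its shortest decimal representation that reads back to $v$. For a nonzero terminating decimal $x$, $DP(x)$ is the least nonnegative integer $j$ with $x \times 10^j$ an integer, and $DS(x) = DP(x) + \lfloor \log_{10}|x|\rfloor + 1$; $DP(0)=DS(0)=0$. $v \otimes 10^{i}$ and $a \div 10^i$ denote multiplication and division computed in IEEE 754 double-precision arithmetic (round-to-nearest), with $10^i$ represented as a double. $round(\cdot)$ denotes rounding to the nearest integer. *)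

theory Defs
  imports Complex_Main
begin

definition is_double :: "real \<Rightarrow> bool" where
  "is_double x \<longleftrightarrow> (\<exists>m e::int. x = of_int m * 2 powr of_int e \<and>
      \<bar>m\<bar> < 2^53 \<and> -1074 \<le> e \<and> e \<le> 971)"

definition is_normal_double :: "real \<Rightarrow> bool" where
  "is_normal_double x \<longleftrightarrow> is_double x \<and> \<bar>x\<bar> \<ge> 2 powr -1022"

definition round_half_even :: "real \<Rightarrow> int" where
  "round_half_even q =
     (let f = \<lfloor>q\<rfloor> in
      if q - of_int f < 1/2 then f
      else if q - of_int f > 1/2 then f + 1
      else if even f then f else f + 1)"

definition dbl_ulp_exp :: "real \<Rightarrow> int" where
  "dbl_ulp_exp x = max (\<lfloor>log 2 \<bar>x\<bar>\<rfloor> - 52) (-1074)"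

text \<open>Round-to-nearest-even to binary64 precision with unbounded exponent range.\<close>
definition dbl_round :: "real \<Rightarrow> real" where
  "dbl_round x = (if x = 0 then 0 else
     of_int (round_half_even (x / 2 powr of_int (dbl_ulp_exp x))) * 2 powr of_int (dbl_ulp_exp x))"

text \<open>IEEE 754 rounding of an exact real result to a double: None = overflow (infinity).\<close>
definition fl :: "real \<Rightarrow> real option" where
  "fl x = (if \<bar>dbl_round x\<bar> \<ge> 2 ^ 1024 then None else Some (dbl_round x))"

definition is_terminating_decimal :: "real \<Rightarrow> bool" where
  "is_terminating_decimal x \<longleftrightarrow> (\<exists>j::nat. x * 10 ^ j \<in> \<int>)"

definition DP :: "real \<Rightarrow> nat" where
  "DP x = (if x = 0 then 0 else (LEAST j::nat. x * 10 ^ j \<in> \<int>))"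

definition DS :: "real \<Rightarrow> int" where
  "DS x = (if x = 0 then 0 else int (DP x) + \<lfloor>log 10 \<bar>x\<bar>\<rfloor> + 1)"

definition DF :: "real \<Rightarrow> real" where
  "DF v = (SOME x. is_terminating_decimal x \<and> fl x = Some v \<and>
             (\<forall>y. is_terminating_decimal y \<and> fl y = Some v \<longrightarrow> DS x \<le> DS y))"

end

theory Submission
  imports Defs
begin

(* Write x = DF v = N / 10^a with a = DP x.  The bound DS x <= 15 gives |N| < 10^15, and
   a <= 22 gives 10^a = 5^a * 2^a with 5^a < 2^53, so 10^a and N are doubles.  Since v is
   the rounding of x, |v * 10^a - N| <= |N| / 2^53 + 10^22 / 2^1075 < 1/8; rounding v * 10^a
   adds at most another 1/8, so the nearest integer is exactly N, and the final division
   computes fl (N / 10^a) = fl x = v. *)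

lemma round_half_even_of_int [simp]: "round_half_even (of_int k) = k"
  by (simp add: round_half_even_def Let_def)

lemma abs_round_half_even_diff_le: "\<bar>of_int (round_half_even q) - q\<bar> \<le> 1/2"
proof -
  have "of_int \<lfloor>q\<rfloor> \<le> q" "q < of_int \<lfloor>q\<rfloor> + 1" by linarith+
  then show ?thesis unfolding round_half_even_def Let_def by (auto split: if_splits)
qed

lemma abs_dbl_round_diff_le_ulp: "\<bar>dbl_round x - x\<bar> \<le> 2 powr of_int (dbl_ulp_exp x) / 2"
proof (cases "x = 0")
  case True
  then show ?thesis by (simp add: dbl_round_def)
next
  case False
  define s where "s = (2::real) powr of_int (dbl_ulp_exp x)"
  have s: "s > 0" unfolding s_def by simp
  have "dbl_round x - x = (of_int (round_half_even (x / s)) - x / s) * s"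
    using False s by (simp add: dbl_round_def s_def[symmetric] algebra_simps)
  then have "\<bar>dbl_round x - x\<bar> = \<bar>of_int (round_half_even (x / s)) - x / s\<bar> * s"
    using s by (simp add: abs_mult)
  also have "\<dots> \<le> 1/2 * s"
    using abs_round_half_even_diff_le s by (intro mult_right_mono) auto
  finally show ?thesis unfolding s_def by simp
qed

lemma dbl_ulp_le:
  assumes "x \<noteq> 0"
  shows "2 powr of_int (dbl_ulp_exp x) \<le> \<bar>x\<bar> / 2^52 + 1 / 2^1074"
proof -
  have "(2::real) powr of_int (\<lfloor>log 2 \<bar>x\<bar>\<rfloor> - 52) = 2 powr of_int \<lfloor>log 2 \<bar>x\<bar>\<rfloor> / 2 powr 52"
    by (simp add: powr_diff)
  also have "\<dots> \<le> 2 powr (log 2 \<bar>x\<bar>) / 2 powr 52"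
    by (intro divide_right_mono powr_mono) auto
  also have "\<dots> = \<bar>x\<bar> / 2^52"
    using assms by (simp add: powr_realpow)
  finally have normal: "(2::real) powr of_int (\<lfloor>log 2 \<bar>x\<bar>\<rfloor> - 52) \<le> \<bar>x\<bar> / 2^52" .
  have "(2::real) powr of_int (-1074::int) = 1 / 2 powr 1074"
    by (simp only: of_int_minus of_int_numeral powr_minus_divide)
  then have subnormal: "(2::real) powr of_int (-1074::int) = 1 / 2^1074"
    by (simp only: powr_numeral zero_less_numeral)
  have "0 \<le> \<bar>x\<bar> / (2::real)^52" "0 \<le> 1 / (2::real)^1074" by simp_all
  then show ?thesis
    using normal subnormal unfolding dbl_ulp_exp_def max_def by (split if_split) linarith
qed

lemma abs_dbl_round_diff_le: "\<bar>dbl_round x - x\<bar> \<le> \<bar>x\<bar> / 2^53 + 1 / 2^1075"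
proof (cases "x = 0")
  case True
  then show ?thesis by (simp add: dbl_round_def)
next
  case False
  have "\<bar>dbl_round x - x\<bar> \<le> (\<bar>x\<bar> / 2^52 + 1 / 2^1074) / 2"
    using abs_dbl_round_diff_le_ulp dbl_ulp_le[OF False]
    by (rule order_trans[OF _ divide_right_mono]) simp
  then show ?thesis by simp
qed

lemma dbl_round_of_int_mult_powr:
  assumes m: "\<bar>m\<bar> < 2^53" and e: "-1074 \<le> e"
  shows "dbl_round (of_int m * 2 powr of_int e) = of_int m * 2 powr of_int e"
proof (cases "m = 0")
  case True
  then show ?thesis by (simp add: dbl_round_def)
next
  case False
  define v where "v = (of_int m::real) * 2 powr of_int e"
  define u where "u = dbl_ulp_exp v"
  have "\<bar>real_of_int m\<bar> < 2 powr 53"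
    using m by (simp add: powr_realpow[symmetric])
  then have "log 2 \<bar>of_int m\<bar> < 53"
    using False by (simp add: log_less_iff)
  moreover have "log 2 \<bar>v\<bar> = log 2 \<bar>of_int m\<bar> + of_int e"
    using False by (simp add: v_def abs_mult log_mult)
  ultimately have "\<lfloor>log 2 \<bar>v\<bar>\<rfloor> < 53 + e" by (simp add: floor_less_iff)
  then have "u \<le> e" using e by (simp add: u_def dbl_ulp_exp_def)
  then have scaled: "v / 2 powr of_int u = of_int (m * 2 ^ nat (e - u))"
    by (simp add: v_def powr_diff powr_realpow[symmetric])
  have "v \<noteq> 0" using False by (simp add: v_def)
  then have "dbl_round v = of_int (round_half_even (v / 2 powr of_int u)) * 2 powr of_int u"
    by (simp add: dbl_round_def u_def[symmetric])
  also have "\<dots> = of_int (m * 2 ^ nat (e - u)) * 2 powr of_int u"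
    by (simp only: scaled round_half_even_of_int)
  also have "\<dots> = v"
    using scaled by (simp add: field_simps)
  finally show ?thesis by (simp add: v_def)
qed

lemma is_double_0: "is_double 0"
  unfolding is_double_def by (rule exI[of _ 0], rule exI[of _ 0]) simp

lemma fl_eq_Some_iff: "fl x = Some y \<longleftrightarrow> dbl_round x = y \<and> \<bar>y\<bar> < 2^1024"
  by (auto simp: fl_def)

lemma fl_of_int:
  assumes "\<bar>N\<bar> < 2^53"
  shows "fl (of_int N) = Some (of_int N)"
proof -
  have "\<bar>real_of_int N\<bar> < 2^53"
    using assms by (metis of_int_abs of_int_less_iff of_int_numeral of_int_power)
  then show ?thesis
    using dbl_round_of_int_mult_powr[OF assms, of 0] by (simp add: fl_eq_Some_iff)
qed

lemma fl_power_10: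
  assumes "a \<le> 22"
  shows "fl (10 ^ a) = Some (10 ^ a)"
proof -
  have "(5::int) ^ a \<le> 5 ^ 22" using assms by (intro power_increasing) auto
  then have "\<bar>(5::int) ^ a\<bar> < 2^53" by simp
  moreover have "(10::real) ^ a = of_int (5 ^ a) * 2 powr of_int (int a)"
    by (simp add: powr_realpow flip: power_mult_distrib)
  moreover have "(10::real) ^ a \<le> 10 ^ 22" using assms by (intro power_increasing) auto
  ultimately show ?thesis
    using dbl_round_of_int_mult_powr[of "5 ^ a" "int a"] by (simp add: fl_eq_Some_iff)
qed

lemma fl_double:
  assumes "is_double v"
  shows "fl v = Some v"
proof -
  from assms obtain m e where v: "v = of_int m * 2 powr of_int e" and m: "\<bar>m\<bar> < 2^53"
    and e: "-1074 \<le> e" "e \<le> 971" unfolding is_double_def by blast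
  have "\<bar>real_of_int m\<bar> < 2^53"
    using m by (metis of_int_abs of_int_less_iff of_int_numeral of_int_power)
  then have "\<bar>v\<bar> < 2^53 * 2 powr of_int e"
    by (simp add: v abs_mult)
  also have "\<dots> \<le> 2^53 * 2 powr 971"
    using e by (intro mult_left_mono powr_mono) simp_all
  also have "\<dots> = 2^1024"
    by (simp add: powr_numeral flip: power_add)
  finally show ?thesis
    using dbl_round_of_int_mult_powr[OF m e(1)] v by (simp add: fl_eq_Some_iff)
qed

lemma is_double_terminating_decimal:
  assumes "is_double v"
  shows "is_terminating_decimal v"
proof -
  from assms obtain m e where v: "v = of_int m * 2 powr of_int e"
    unfolding is_double_def by blast
  show ?thesis
  proof (cases "e \<ge> 0")
    case True
    then have "v * 10 ^ 0 = of_int (m * 2 ^ nat e)"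
      by (simp add: v powr_realpow[symmetric])
    then show ?thesis unfolding is_terminating_decimal_def by (metis Ints_of_int)
  next
    case False
    define k where "k = nat (-e)"
    have "real k = - of_int e" using False by (simp add: k_def)
    then have one: "2 powr of_int e * 2 ^ k = (1::real)"
      by (simp add: powr_realpow[symmetric] flip: powr_add)
    have "(10::real) ^ k = 2 ^ k * 5 ^ k" by (simp flip: power_mult_distrib)
    then have "v * 10 ^ k = of_int m * 5 ^ k * (2 powr of_int e * 2 ^ k)"
      by (simp only: v ac_simps)
    then have "v * 10 ^ k = of_int (m * 5 ^ k)" unfolding one by simp
    then show ?thesis unfolding is_terminating_decimal_def by (metis Ints_of_int)
  qed
qed

lemma mult_10_power_DP_in_Ints:
  assumes "is_terminating_decimal y"
  shows "y * 10 ^ DP y \<in> \<int>"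
proof (cases "y = 0")
  case True
  then show ?thesis by (simp add: DP_def)
next
  case False
  from assms obtain j where "y * 10 ^ j \<in> \<int>"
    unfolding is_terminating_decimal_def by blast
  then have "y * 10 ^ (LEAST j::nat. y * 10 ^ j \<in> \<int>) \<in> \<int>" by (rule LeastI)
  then show ?thesis using False by (simp add: DP_def)
qed

lemma DS_nonneg:
  assumes "is_terminating_decimal y"
  shows "DS y \<ge> 0"
proof (cases "y = 0")
  case True
  then show ?thesis by (simp add: DS_def)
next
  case False
  define d where "d = DP y"
  from mult_10_power_DP_in_Ints[OF assms] obtain K where K: "y * 10 ^ d = of_int K"
    unfolding d_def by (metis Ints_cases)
  have "K \<noteq> 0" using K False by auto
  then have "\<bar>of_int K\<bar> \<ge> (1::real)" by linarith
  then have "\<bar>y\<bar> * 10 ^ d \<ge> 1"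
    using K by (metis abs_mult abs_of_nonneg zero_le_power zero_le_numeral)
  then have "\<bar>y\<bar> \<ge> 1 / 10 ^ d" by (simp add: field_simps)
  then have "log 10 (1 / 10 ^ d) \<le> log 10 \<bar>y\<bar>"
    using False by (subst log_le_cancel_iff) auto
  then have "- int d \<le> \<lfloor>log 10 \<bar>y\<bar>\<rfloor>"
    by (simp add: log_divide log_nat_power le_floor_iff)
  then show ?thesis using False by (simp add: DS_def d_def)
qed

lemma abs_mult_10_power_DP_less:
  assumes "y \<noteq> 0" "DS y \<le> int k"
  shows "\<bar>y\<bar> * 10 ^ DP y < 10 ^ k"
proof -
  define d where "d = DP y"
  have "\<lfloor>log 10 \<bar>y\<bar>\<rfloor> < int k - int d"
    using assms by (simp add: DS_def d_def)
  then have "log 10 \<bar>y\<bar> < real k - real d"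
    by (simp add: floor_less_iff)
  then have "\<bar>y\<bar> < 10 powr (real k - real d)"
    using assms(1) by (simp add: log_less_iff)
  then have "\<bar>y\<bar> * 10 powr real d < 10 powr (real k - real d) * 10 powr real d"
    by (intro mult_strict_right_mono) auto
  also have "\<dots> = 10 ^ k"
    by (simp only: powr_add[symmetric] diff_add_cancel) (simp add: powr_realpow)
  finally show ?thesis
    by (simp add: d_def powr_realpow)
qed

lemma DF_correct:
  assumes "is_double v"
  shows "is_terminating_decimal (DF v) \<and> fl (DF v) = Some v"
proof -
  let ?P = "\<lambda>y. is_terminating_decimal y \<and> fl y = Some v"
  have "?P v" using assms by (simp add: is_double_terminating_decimal fl_double)
  then obtain y0 where y0: "?P y0" and min: "\<forall>y. ?P y \<longrightarrow> nat (DS y0) \<le> nat (DS y)"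
    using ex_has_least_nat[of ?P v "\<lambda>y. nat (DS y)"] by blast
  then have "\<forall>y. ?P y \<longrightarrow> DS y0 \<le> DS y"
    using DS_nonneg by (metis nat_le_eq_zle)
  then have "\<exists>x. ?P x \<and> (\<forall>y. ?P y \<longrightarrow> DS x \<le> DS y)" using y0 by blast
  then have "?P (SOME x. ?P x \<and> (\<forall>y. ?P y \<longrightarrow> DS x \<le> DS y))" by (rule someI2_ex) blast
  then show ?thesis unfolding DF_def by (simp only: conj_assoc)
qed

lemma round_fl_scale_recovers_numerator:
  assumes v: "dbl_round (of_int N / p) = v"
    and N: "\<bar>of_int N\<bar> < (10::real)^15" and p: "0 < p" "p \<le> 10^22"
  shows "\<exists>w. fl (v * p) = Some w \<and> round w = N"
proof -
  let ?x = "of_int N / p"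
  have "\<bar>v * p - of_int N\<bar> = \<bar>v - ?x\<bar> * p"
    using p by (simp add: abs_mult[symmetric] field_simps)
  also have "\<dots> \<le> (\<bar>?x\<bar> / 2^53 + 1 / 2^1075) * p"
    using abs_dbl_round_diff_le[of ?x] v p by (intro mult_right_mono) auto
  also have "\<dots> = \<bar>of_int N\<bar> / 2^53 + p / 2^1075"
    using p by (simp add: field_simps abs_divide)
  also have "\<dots> \<le> 10^15 / 2^53 + 10^22 / 2^1075"
    using N p by (intro add_mono divide_right_mono) auto
  finally have scaled: "\<bar>v * p - of_int N\<bar> \<le> 1/8" by simp
  then have product: "\<bar>v * p\<bar> \<le> 10^15 + 1/8" using N by linarith
  define w where "w = dbl_round (v * p)"
  have "\<bar>w - v * p\<bar> \<le> \<bar>v * p\<bar> / 2^53 + 1 / 2^1075"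
    unfolding w_def by (rule abs_dbl_round_diff_le)
  also have "\<dots> \<le> (10^15 + 1/8) / 2^53 + 1 / 2^1075"
    using product by (intro add_mono divide_right_mono) auto
  finally have rounded: "\<bar>w - v * p\<bar> \<le> 1/8" by simp
  have "\<bar>w\<bar> \<le> 10^15 + 1" using rounded product by linarith
  also have "\<dots> < 2^1024" by simp
  finally have "fl (v * p) = Some w" by (simp add: fl_eq_Some_iff w_def)
  moreover have "round w = N"
    using scaled rounded by (intro round_unique') linarith
  ultimately show ?thesis by blast
qed

theorem theorem3:
  fixes v :: real
  assumes "v = 0 \<or> is_normal_double v"
    and "DP (DF v) \<le> 22"
    and "DS (DF v) \<le> 15"
  shows "\<exists>p w n. fl (10 ^ DP (DF v)) = Some p \<and> fl (v * p) = Some w \<and>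
           fl (of_int (round w)) = Some n \<and> fl (n / p) = Some v"
proof -
  have "is_double v"
    using assms(1) is_double_0 by (auto simp: is_normal_double_def)
  then have x: "is_terminating_decimal (DF v)" "fl (DF v) = Some v"
    using DF_correct by blast+
  define p where "p = (10::real) ^ DP (DF v)"
  obtain N where N: "DF v * p = of_int N"
    using mult_10_power_DP_in_Ints[OF x(1)] unfolding p_def by (metis Ints_cases)
  have "\<bar>real_of_int N\<bar> = \<bar>DF v\<bar> * p"
    using N[symmetric] by (simp add: p_def abs_mult)
  then have N_bound: "\<bar>real_of_int N\<bar> < 10^15"
    using abs_mult_10_power_DP_less[of "DF v" 15] assms(3) N
    by (cases "DF v = 0") (auto simp: p_def)
  have x_eq: "DF v = of_int N / p"
    using N by (simp add: p_def field_simps)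
  have "dbl_round (of_int N / p) = v"
    using x(2) by (simp add: x_eq[symmetric] fl_eq_Some_iff)
  moreover have "0 < p" by (simp add: p_def)
  moreover have "p \<le> 10^22"
    unfolding p_def using assms(2) by (intro power_increasing) auto
  ultimately obtain w where w: "fl (v * p) = Some w" "round w = N"
    using round_fl_scale_recovers_numerator N_bound by blast
  have "\<bar>N\<bar> < 10^15"
    using N_bound by (metis of_int_abs of_int_less_iff of_int_numeral of_int_power)
  then have "fl (of_int N) = Some (of_int N)"
    by (intro fl_of_int) simp
  moreover have "fl (10 ^ DP (DF v)) = Some p"
    unfolding p_def using assms(2) by (rule fl_power_10)
  ultimately show ?thesis
    using w x(2) x_eq by auto
qed

end
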